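(* Let $P\ge 1$, $m\ge 2$, $y\in\mathbb{R}^P$, $z_1,\dots,z_m\in\mathbb{R}^P$, $Z=[z_1,\dots,z_m]$, $d=(d_1,\dots,d_m)^{\mathsf T}$ with all $d_j>0$, $D=\operatorname{diag}(d)$, $\lambda>0$ and $\rho\in\mathbb{R}$. Assume $d_j>d_1$ for all $j\in\{2,\dots,m\}$ (as is the case when $z_1$ is the unique nearest neighbour of $y$ and the weights are strictly increasing with distance to $y$). Let $$f(\beta)=\tfrac12\,\beta^{\mathsf T}\big(Z^{\mathsf T}Z+\lambda D^{\mathsf T}D\big)\beta+\big(\rho\, d-Z^{\mathsf T}y\big)^{\mathsf T}\beta .$$ If $$\rho>\max_{j\in\{2,\dots,m\}}\frac{(z_1-z_j)^{\mathsf T}(z_1-y)+\lambda d_1^2}{d_j-d_1},$$ then $e_1=(1,0,\dots,0)^{\mathsf T}$ is the (unique) minimiser of $f$ over the unit simplex $\Delta^m=\{\beta\in\mathbb{R}^m:\beta\ge 0,\ \beta^{\mathsf T}\mathbf 1=1\}$. *)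

theory Defs
  imports "HOL-Analysis.Analysis"
begin

text \<open>Vectors in R^m are represented as functions nat => real indexed by 1..m,
  required to vanish outside 1..m. Points in R^P are elements of real^'p.\<close>

definition unit_simplex :: "nat \<Rightarrow> (nat \<Rightarrow> real) set" where
  "unit_simplex m = {\<beta>. (\<forall>j\<in>{1..m}. 0 \<le> \<beta> j) \<and> (\<Sum>j=1..m. \<beta> j) = 1
                        \<and> (\<forall>j. j \<notin> {1..m} \<longrightarrow> \<beta> j = 0)}"

definition e1 :: "nat \<Rightarrow> real" where
  "e1 = (\<lambda>j. if j = 1 then 1 else 0)"

definition objective ::
  "nat \<Rightarrow> (nat \<Rightarrow> real ^ 'p) \<Rightarrow> (nat \<Rightarrow> real) \<Rightarrow> real \<Rightarrow> real \<Rightarrow> real ^ 'p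
     \<Rightarrow> (nat \<Rightarrow> real) \<Rightarrow> real" where
  "objective m z d lam rho y \<beta> =
     1/2 * ((\<Sum>i=1..m. \<Sum>j=1..m. \<beta> i * (z i \<bullet> z j) * \<beta> j)
            + lam * (\<Sum>j=1..m. (d j)^2 * (\<beta> j)^2))
     + (\<Sum>j=1..m. (rho * d j - z j \<bullet> y) * \<beta> j)"

end

theory Submission
  imports Defs
begin

text \<open>Expanding the quadratic objective around e1 splits f(\<beta>) - f(e1) into the linear
  term of the gradient g at e1 and a positive definite quadratic term (definite because
  lam > 0 and all d j \<noteq> 0). On the simplex the linear term equals the sum of
  (g j - g 1) * \<beta> j, and the bound on rho says exactly that g j > g 1 for j \<ge> 2.
  Hence both terms are nonnegative and the quadratic one vanishes only at e1.\<close>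

lemma e1_in_unit_simplex: "1 \<le> m \<Longrightarrow> e1 \<in> unit_simplex m"
  by (simp add: unit_simplex_def e1_def sum.delta)

lemma weighted_sum_squares_eq_0_iff:
  fixes d x :: "'a \<Rightarrow> real"
  assumes "finite S" and "\<forall>j\<in>S. d j \<noteq> 0"
  shows "(\<Sum>j\<in>S. (d j)^2 * (x j)^2) = 0 \<longleftrightarrow> (\<forall>j\<in>S. x j = 0)"
  using assms by (simp add: sum_nonneg_eq_0_iff)

lemma unit_simplex_eqI:
  assumes "\<alpha> \<in> unit_simplex m" and "\<beta> \<in> unit_simplex m" and "\<forall>j\<in>{1..m}. \<alpha> j = \<beta> j"
  shows "\<alpha> = \<beta>"
  using assms by (auto simp: unit_simplex_def fun_eq_iff)

lemma sum_scaleR_e1: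
  fixes z :: "nat \<Rightarrow> 'a::real_vector"
  assumes "1 \<le> m"
  shows "(\<Sum>i=1..m. e1 i *\<^sub>R z i) = z 1"
proof -
  have "e1 i *\<^sub>R z i = (if i = 1 then z 1 else 0)" for i by (simp add: e1_def)
  with assms show ?thesis by simp
qed

lemma sum_times_diff_e1_unit_simplex:
  assumes "\<beta> \<in> unit_simplex m"
  shows "(\<Sum>j=1..m. g j * (\<beta> j - e1 j)) = (\<Sum>j=1..m. (g j - g 1) * \<beta> j)"
proof -
  have sum1: "(\<Sum>j=1..m. \<beta> j) = 1" using assms by (simp add: unit_simplex_def)
  then have "1 \<le> m" by (cases "m = 0") auto
  have "(\<Sum>j=1..m. g j * (\<beta> j - e1 j)) = (\<Sum>j=1..m. g j * \<beta> j) - (\<Sum>j=1..m. g j * e1 j)"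
    by (simp add: right_diff_distrib sum_subtractf)
  also have "(\<Sum>j=1..m. g j * e1 j) = g 1"
    using \<open>1 \<le> m\<close> by (simp add: e1_def if_distrib[of "\<lambda>c. _ * c"] sum.delta cong: if_cong)
  also have "\<dots> = (\<Sum>j=1..m. g 1 * \<beta> j)"
    by (simp only: sum_distrib_left[symmetric] sum1 mult_1_right)
  finally show ?thesis
    by (simp add: left_diff_distrib sum_subtractf)
qed

definition objective_grad ::
  "nat \<Rightarrow> (nat \<Rightarrow> real ^ 'p) \<Rightarrow> (nat \<Rightarrow> real) \<Rightarrow> real \<Rightarrow> real \<Rightarrow> real ^ 'p
     \<Rightarrow> (nat \<Rightarrow> real) \<Rightarrow> nat \<Rightarrow> real" where
  "objective_grad m z d lam rho y \<alpha> j =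
     z j \<bullet> (\<Sum>i=1..m. \<alpha> i *\<^sub>R z i) + lam * (d j)^2 * \<alpha> j + rho * d j - z j \<bullet> y"

lemma gram_sum_eq_inner:
  "(\<Sum>i\<in>S. \<Sum>j\<in>S. \<beta> i * (z i \<bullet> z j) * \<beta> j)
     = (\<Sum>i\<in>S. \<beta> i *\<^sub>R z i) \<bullet> (\<Sum>j\<in>S. \<beta> j *\<^sub>R z j)"
  by (simp add: inner_sum_left inner_sum_right sum_distrib_left mult.commute mult.left_commute)
    (simp add: inner_commute)

lemma objective_taylor:
  "objective m z d lam rho y \<beta> =
     objective m z d lam rho y \<alpha>
     + (\<Sum>j=1..m. objective_grad m z d lam rho y \<alpha> j * (\<beta> j - \<alpha> j))
     + 1/2 * (norm (\<Sum>j=1..m. (\<beta> j - \<alpha> j) *\<^sub>R z j))^2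
     + lam/2 * (\<Sum>j=1..m. (d j)^2 * (\<beta> j - \<alpha> j)^2)"
proof -
  define S where "S = {1..m}"
  define \<delta> where "\<delta> j = \<beta> j - \<alpha> j" for j
  define A where "A = (\<Sum>j\<in>S. \<alpha> j *\<^sub>R z j)"
  define B where "B = (\<Sum>j\<in>S. \<delta> j *\<^sub>R z j)"
  have \<beta>: "\<beta> j = \<alpha> j + \<delta> j" for j by (simp add: \<delta>_def)
  have comb: "(\<Sum>j\<in>S. \<beta> j *\<^sub>R z j) = A + B"
    by (simp add: A_def B_def \<beta> scaleR_add_left sum.distrib)
  have cross: "A \<bullet> B = (\<Sum>j\<in>S. (z j \<bullet> A) * \<delta> j)"
    by (simp add: B_def inner_sum_right inner_commute mult.commute)
  have gram: "(A + B) \<bullet> (A + B) = A \<bullet> A + 2 * (A \<bullet> B) + B \<bullet> B"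
    by (simp add: inner_add_left inner_add_right inner_commute)
  have weights: "(\<Sum>j\<in>S. (d j)^2 * (\<beta> j)^2)
      = (\<Sum>j\<in>S. (d j)^2 * (\<alpha> j)^2) + 2 * (\<Sum>j\<in>S. (d j)^2 * \<alpha> j * \<delta> j)
        + (\<Sum>j\<in>S. (d j)^2 * (\<delta> j)^2)"
    by (simp add: \<beta> power2_sum algebra_simps sum.distrib sum_distrib_left)
  have linear: "(\<Sum>j\<in>S. (rho * d j - z j \<bullet> y) * \<beta> j)
      = (\<Sum>j\<in>S. (rho * d j - z j \<bullet> y) * \<alpha> j) + (\<Sum>j\<in>S. (rho * d j - z j \<bullet> y) * \<delta> j)"
    by (simp add: \<beta> distrib_left sum.distrib)
  have "objective_grad m z d lam rho y \<alpha> j = z j \<bullet> A + lam * (d j)^2 * \<alpha> j + (rho * d j - z j \<bullet> y)" for j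
    by (simp add: objective_grad_def A_def S_def)
  then have grad: "(\<Sum>j\<in>S. objective_grad m z d lam rho y \<alpha> j * \<delta> j)
      = A \<bullet> B + lam * (\<Sum>j\<in>S. (d j)^2 * \<alpha> j * \<delta> j) + (\<Sum>j\<in>S. (rho * d j - z j \<bullet> y) * \<delta> j)"
    by (simp add: cross distrib_right sum.distrib sum_distrib_left mult.assoc)
  show ?thesis
    unfolding objective_def S_def[symmetric] \<delta>_def[symmetric] B_def[symmetric]
      gram_sum_eq_inner comb A_def[symmetric] grad power2_norm_eq_inner gram weights linear
    by (simp add: algebra_simps)
qed

lemma objective_grad_e1_diff:
  assumes "1 \<le> m" and "j \<noteq> 1"
  shows "objective_grad m z d lam rho y e1 j - objective_grad m z d lam rho y e1 1
     = rho * (d j - d 1) - ((z 1 - z j) \<bullet> (z 1 - y) + lam * (d 1)^2)"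
  using assms unfolding objective_grad_def sum_scaleR_e1[OF assms(1)]
  by (simp add: e1_def inner_diff_left inner_diff_right
      inner_commute algebra_simps)

lemma objective_sub_e1_unit_simplex:
  assumes "\<beta> \<in> unit_simplex m"
  shows "objective m z d lam rho y \<beta> - objective m z d lam rho y e1
     = (\<Sum>j=1..m. (objective_grad m z d lam rho y e1 j - objective_grad m z d lam rho y e1 1) * \<beta> j)
       + 1/2 * (norm (\<Sum>j=1..m. (\<beta> j - e1 j) *\<^sub>R z j))^2
       + lam/2 * (\<Sum>j=1..m. (d j)^2 * (\<beta> j - e1 j)^2)"
  using objective_taylor[of m z d lam rho y \<beta> e1]
  unfolding sum_times_diff_e1_unit_simplex[OF assms] by simp

lemma objective_e1_add_weighted_le:
  assumes "\<forall>j\<in>{1..m}. objective_grad m z d lam rho y e1 1 \<le> objective_grad m z d lam rho y e1 j"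
    and "\<beta> \<in> unit_simplex m"
  shows "objective m z d lam rho y e1 + lam/2 * (\<Sum>j=1..m. (d j)^2 * (\<beta> j - e1 j)^2)
     \<le> objective m z d lam rho y \<beta>"
proof -
  have "(\<Sum>j=1..m. (objective_grad m z d lam rho y e1 j - objective_grad m z d lam rho y e1 1) * \<beta> j) \<ge> 0"
    using assms by (auto simp: unit_simplex_def intro!: sum_nonneg)
  then show ?thesis
    using objective_sub_e1_unit_simplex[OF assms(2), where z=z and d=d and lam=lam and rho=rho and y=y]
      zero_le_power2[of "norm (\<Sum>j=1..m. (\<beta> j - e1 j) *\<^sub>R z j)"] by linarith
qed

lemma objective_grad_e1_ge:
  assumes "\<forall>j\<in>{2..m}. d j > d 1"
    and "rho > Max ((\<lambda>j. ((z 1 - z j) \<bullet> (z 1 - y) + lam * (d 1)^2) / (d j - d 1)) ` {2..m})"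
    and "j \<in> {1..m}"
  shows "objective_grad m z d lam rho y e1 j \<ge> objective_grad m z d lam rho y e1 1"
proof (cases "j = 1")
  case False
  with assms(3) have j: "j \<in> {2..m}" by auto
  then have "((z 1 - z j) \<bullet> (z 1 - y) + lam * (d 1)^2) / (d j - d 1) < rho"
    using assms(2) by (meson Max_ge finite_atLeastAtMost finite_imageI image_eqI le_less_trans)
  with j assms(1) have "(z 1 - z j) \<bullet> (z 1 - y) + lam * (d 1)^2 < rho * (d j - d 1)"
    by (simp add: divide_less_eq)
  with False j objective_grad_e1_diff[of m j z d lam rho y] show ?thesis by simp
qed simp

theorem proposition2:
  fixes m :: nat and y :: "real ^ 'p" and z :: "nat \<Rightarrow> real ^ 'p"
    and d :: "nat \<Rightarrow> real" and lam rho :: real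
  assumes "m \<ge> 2"
    and "\<forall>j\<in>{1..m}. d j > 0"
    and "lam > 0"
    and "\<forall>j\<in>{2..m}. d j > d 1"
    and "rho > Max ((\<lambda>j. ((z 1 - z j) \<bullet> (z 1 - y) + lam * (d 1)^2) / (d j - d 1)) ` {2..m})"
  shows "e1 \<in> unit_simplex m
     \<and> (\<forall>\<beta>\<in>unit_simplex m. objective m z d lam rho y e1 \<le> objective m z d lam rho y \<beta>)
     \<and> (\<forall>\<beta>\<in>unit_simplex m. objective m z d lam rho y \<beta> = objective m z d lam rho y e1 \<longrightarrow> \<beta> = e1)"
proof -
  let ?f = "objective m z d lam rho y" and ?W = "\<lambda>\<beta>. \<Sum>j=1..m. (d j)^2 * (\<beta> j - e1 j)^2"
  have e1_simplex: "e1 \<in> unit_simplex m" using assms(1) by (simp add: e1_in_unit_simplex)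
  have bound: "?f e1 + lam/2 * ?W \<beta> \<le> ?f \<beta>" if "\<beta> \<in> unit_simplex m" for \<beta>
    by (rule objective_e1_add_weighted_le[OF ballI[OF objective_grad_e1_ge[OF assms(4,5)]] that])
  have W_nonneg: "?W \<beta> \<ge> 0" for \<beta> by (simp add: sum_nonneg)
  have lam_W_nonneg: "lam/2 * ?W \<beta> \<ge> 0" for \<beta> using W_nonneg[of \<beta>] assms(3) by simp
  have d_nonzero: "\<forall>j\<in>{1..m}. d j \<noteq> 0" using assms(2) by fastforce
  have "\<beta> = e1" if "\<beta> \<in> unit_simplex m" and "?f \<beta> = ?f e1" for \<beta>
  proof -
    have "lam/2 * ?W \<beta> \<le> 0" using bound[OF that(1)] that(2) by simp
    then have "?W \<beta> = 0" using W_nonneg[of \<beta>] assms(3) by (simp add: mult_le_0_iff)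
    with d_nonzero show ?thesis
      using weighted_sum_squares_eq_0_iff[of "{1..m}" d "\<lambda>j. \<beta> j - e1 j"]
        unit_simplex_eqI[OF that(1) e1_simplex] by simp
  qed
  moreover have "?f e1 \<le> ?f \<beta>" if "\<beta> \<in> unit_simplex m" for \<beta>
    using bound[OF that] lam_W_nonneg[of \<beta>] by linarith
  ultimately show ?thesis using e1_simplex by auto
qed

end
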